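(* For every integer $n\ge 1$, let $\rho_n$ be the number of distinct Manacher arrays of strings of length $n$ (over arbitrary alphabets), and let $r_{m}$ be the number of distinct rooted duplication trees with $m$ leaves. Then $\rho_n \le r_{n+1}$.
   Context: Strings are indexed from 1; $S[i..j]=S[i]S[i+1]\cdots S[j]$ (empty if $j<i$). A string $P$ is a palindrome if $P[i]=P[|P|-i+1]$ for all $i$. The Manacher array of a string $S$ of length $n$ is the array $\mathsf A[1..2n-1]$ where, for $i=2k-1$, $\mathsf A[i]$ is the largest $r\ge 0$ with $1\le k-r$, $k+r\le n$ and $S[k-r..k+r]$ a palindrome, and for $i=2k$, $\mathsf A[i]$ is the largest $r\ge0$ with $1\le k-r+1$, $k+r\le n$ and $S[k-r+1..k+r]$ a palindrome. Rooted duplication trees: start with the ordered array $(g)$ consisting of a single gene (the root). A tandem-duplication event applied to a current ordered array of genes $(g_1,\dots,g_m)$ chooses a contiguous block $g_i,\dots,g_{i+\ell-1}$ ($1\le i\le i+\ell-1\le m$), creates for each $g_j$ in the block two new genes $\mathrm{lc}(g_j)$, $\mathrm{rc}(g_j)$ (its left and right child), and replaces the block by $\mathrm{lc}(g_i),\dots,\mathrm{lc}(g_{i+\ell-1}),\mathrm{rc}(g_i),\dots,\mathrm{rc}(g_{i+\ell-1})$. A rooted duplication tree is a rooted binary tree (each internal node has a left and a right child) together with the linear order on its leaves, which arises from the single root by some finite sequence of such events (internal nodes are the duplicated genes, leaves are the genes of the final array, in the final array's order). Two such trees are identified if they are isomorphic as rooted binary trees preserving left/right children and the leaf order; $r_m$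 counts the resulting classes with $m$ leaves. *)

theory Defs
  imports Main
begin

text \<open>1-indexed substring S[a..b] (for a \<ge> 1); empty if b < a.\<close>
definition substr :: "'a list \<Rightarrow> nat \<Rightarrow> nat \<Rightarrow> 'a list" where
  "substr S a b = take (Suc b - a) (drop (a - 1) S)"

definition is_palindrome :: "'a list \<Rightarrow> bool" where
  "is_palindrome P \<longleftrightarrow> (\<forall>i\<in>{1..length P}. P ! (i - 1) = P ! (length P - i))"

definition manacher_entry :: "'a list \<Rightarrow> nat \<Rightarrow> nat" where
  "manacher_entry S i =
     (let n = length S in
      if odd i then
        (let k = (i + 1) div 2 in
         GREATEST r. 1 + r \<le> k \<and> k + r \<le> n \<and> is_palindrome (substr S (k - r) (k + r)))
      else
        (let k = i div 2 in
         GREATEST r. r \<le> k \<and> k + r \<le> n \<and> is_palindrome (substr S (k - r + 1) (k + r))))"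

text \<open>The Manacher array A[1..2n-1], as a list (list position j holds A[j+1]).\<close>
definition manacher :: "'a list \<Rightarrow> nat list" where
  "manacher S = map (manacher_entry S) [1..<2 * length S]"

text \<open>Number of distinct Manacher arrays of strings of length n. Strings are taken
  over the alphabet nat (a string of length n uses at most n letters, so every
  alphabet is covered up to renaming).\<close>
definition rho :: "nat \<Rightarrow> nat" where
  "rho n = card {manacher (S :: nat list) | S. length S = n}"

text \<open>Genes are identified with their path from the root (False = left child,
  True = right child). A rooted duplication tree (with its leaf order) is then
  exactly the final ordered array of paths.\<close>
definition dup_event :: "bool list list \<Rightarrow> nat \<Rightarrow> nat \<Rightarrow> bool list list" where
  "dup_event xs i l =
     (let blk = take l (drop (i - 1) xs) in
      take (i - 1) xs @ map (\<lambda>p. p @ [False]) blk @ map (\<lambda>p. p @ [True]) blk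
        @ drop (i - 1 + l) xs)"

inductive dup_reachable :: "bool list list \<Rightarrow> bool" where
  root: "dup_reachable [[]]"
| step: "dup_reachable xs \<Longrightarrow> 1 \<le> i \<Longrightarrow> 1 \<le> l \<Longrightarrow> i + l - 1 \<le> length xs
           \<Longrightarrow> dup_reachable (dup_event xs i l)"

definition r_count :: "nat \<Rightarrow> nat" where
  "r_count m = card {xs. dup_reachable xs \<and> length xs = m}"

end

theory Submission
  imports Defs
begin

text \<open>
  The Manacher array of \<open>S\<close> only depends on the set of palindromic segments of \<open>S\<close>, so
  \<open>\<rho>\<^sub>n\<close> is at most the number of such palindromic structures of length \<open>n\<close>. When a
  letter \<open>c\<close> is appended, the new palindromes are the suffixes \<open>c P c\<close> with \<open>P\<close> a palindromic
  suffix of \<open>S\<close> preceded by \<open>c\<close>, and by a reflection argument whether two palindromic suffixes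
  are preceded by the same letter is itself determined by the structure. So a structure with
  \<open>h\<close> palindromic suffixes preceded by \<open>J\<close> distinct letters has at most \<open>J + 1\<close> one-letter
  extensions, and a weight \<open>a\<^sub>m + b\<^sub>m h + g\<^sub>m J\<close> whose coefficients follow a linear recurrence
  bounds the number of structures \<open>m\<close> letters further. This gives \<open>\<rho>\<^sub>n \<le> v\<^sub>n\<close> for an explicit
  linearly recurrent sequence \<open>v\<close>.

  In the other direction, grafting duplication arrays below the leaves of the arrays with two and four
  leaves shows that \<open>r\<close> dominates its own convolution plus its fourfold convolution. Together
  with the first twelve values this yields \<open>v\<^sub>n \<le> r\<^sub>n\<^sub>+\<^sub>1\<close> by induction.
\<close>

section \<open>Duplication arrays\<close>

lemma length_dup_event:
  assumes "1 \<le> i" "1 \<le> l" "i + l - 1 \<le> length xs"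
  shows "length (dup_event xs i l) = length xs + l"
  using assms unfolding dup_event_def Let_def by (simp add: min_def) linarith

lemma set_dup_event_subset:
  "set (dup_event xs i l) \<subseteq> set xs \<union> (\<lambda>p. p @ [False]) ` set xs \<union> (\<lambda>p. p @ [True]) ` set xs"
  unfolding dup_event_def Let_def by (auto dest!: in_set_takeD in_set_dropD)

lemma dup_reachable_nonempty: "dup_reachable xs \<Longrightarrow> xs \<noteq> []"
  by (induction rule: dup_reachable.induct) (auto simp: length_dup_event simp flip: length_greater_0_conv)

lemma dup_reachable_length_path:
  "dup_reachable xs \<Longrightarrow> p \<in> set xs \<Longrightarrow> length p < length xs"
proof (induction arbitrary: p rule: dup_reachable.induct)
  case root
  then show ?case by simp
next
  case (step xs i l)
  have "length (dup_event xs i l) = length xs + l"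
    using step.hyps by (intro length_dup_event)
  moreover have "p \<in> set xs \<or> (\<exists>q\<in>set xs. p = q @ [False] \<or> p = q @ [True])"
    using step.prems set_dup_event_subset by blast
  ultimately show ?case using step.hyps by (auto dest!: step.IH)
qed

lemma dup_event_in_context:
  assumes "1 \<le> i" "1 \<le> l" "i + l - 1 \<le> length xs"
  shows "dup_event (pre @ map ((@) p) xs @ post) (i + length pre) l
       = pre @ map ((@) p) (dup_event xs i l) @ post"
proof -
  have "i + length pre - 1 = length pre + (i - 1)"
    using assms by simp
  moreover have "take l (drop (i - 1) (map ((@) p) xs @ post)) = map ((@) p) (take l (drop (i - 1) xs))"
    using assms by (simp add: take_map drop_map)
  moreover have "drop (i - 1 + l) (map ((@) p) xs @ post) = map ((@) p) (drop (i - 1 + l) xs) @ post"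
    using assms by (simp add: drop_map)
  moreover have "take (i - 1) (map ((@) p) xs @ post) = map ((@) p) (take (i - 1) xs)"
    using assms by (simp add: take_map)
  ultimately show ?thesis
    unfolding dup_event_def Let_def by (simp add: drop_append take_append add.assoc)
qed

lemma dup_reachable_graft:
  assumes "dup_reachable xs" "dup_reachable (pre @ [p] @ post)"
  shows "dup_reachable (pre @ map ((@) p) xs @ post)"
  using assms(1)
proof induction
  case root
  then show ?case using assms(2) by simp
next
  case (step xs i l)
  have "dup_reachable (dup_event (pre @ map ((@) p) xs @ post) (i + length pre) l)"
    by (rule dup_reachable.step[OF step.IH]) (use step.hyps in auto)
  then show ?case using dup_event_in_context step.hyps by simp
qed

definition dup_arrays :: "nat \<Rightarrow> bool list list set" where
  "dup_arrays m = {xs. dup_reachable xs \<and> length xs = m}"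

lemma r_count_eq_card_dup_arrays: "r_count m = card (dup_arrays m)"
  by (simp add: r_count_def dup_arrays_def)

lemma finite_dup_arrays: "finite (dup_arrays m)"
proof -
  have "dup_arrays m \<subseteq> {xs. set xs \<subseteq> {p. set p \<subseteq> UNIV \<and> length p \<le> m} \<and> length xs = m}"
    unfolding dup_arrays_def using dup_reachable_length_path by fastforce
  moreover have "finite {xs. set xs \<subseteq> {p :: bool list. set p \<subseteq> UNIV \<and> length p \<le> m} \<and> length xs = m}"
    by (intro finite_lists_length_eq finite_lists_length_le) simp
  ultimately show ?thesis by (rule finite_subset)
qed

lemma dup_reachable_two_leaves: "dup_reachable [[False], [True]]"
proof -
  have "dup_reachable (dup_event [[]] 1 1)"
    by (rule dup_reachable.step) (auto intro: dup_reachable.root)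
  then show ?thesis by (simp add: dup_event_def)
qed

lemma dup_reachable_four_leaves:
  "dup_reachable [[False, False], [True, False], [False, True], [True, True]]"
proof -
  have "dup_reachable (dup_event [[False], [True]] 1 2)"
    by (rule dup_reachable.step) (auto intro: dup_reachable_two_leaves)
  then show ?thesis by (simp add: dup_event_def)
qed

definition join2 :: "bool list list \<Rightarrow> bool list list \<Rightarrow> bool list list" where
  "join2 x y = map ((@) [False]) x @ map ((@) [True]) y"

definition join4 ::
  "bool list list \<Rightarrow> bool list list \<Rightarrow> bool list list \<Rightarrow> bool list list \<Rightarrow> bool list list" where
  "join4 x1 x2 x3 x4 = map ((@) [False, False]) x1 @ map ((@) [True, False]) x2
     @ map ((@) [False, True]) x3 @ map ((@) [True, True]) x4"

lemma dup_reachable_join2: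
  assumes "dup_reachable x" "dup_reachable y"
  shows "dup_reachable (join2 x y)"
proof -
  have "dup_reachable ([] @ map ((@) [False]) x @ [[True]])"
    by (rule dup_reachable_graft[OF assms(1)]) (simp add: dup_reachable_two_leaves)
  then have "dup_reachable (map ((@) [False]) x @ map ((@) [True]) y @ [])"
    by (intro dup_reachable_graft[OF assms(2)]) simp
  then show ?thesis by (simp add: join2_def)
qed

lemma dup_reachable_join4:
  assumes "dup_reachable x1" "dup_reachable x2" "dup_reachable x3" "dup_reachable x4"
  shows "dup_reachable (join4 x1 x2 x3 x4)"
proof -
  let ?g = "\<lambda>p. map ((@) p)"
  have "dup_reachable ([] @ ?g [False, False] x1 @ [[True, False], [False, True], [True, True]])"
    by (rule dup_reachable_graft[OF assms(1)]) (simp add: dup_reachable_four_leaves)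
  then have "dup_reachable (?g [False, False] x1 @ ?g [True, False] x2 @ [[False, True], [True, True]])"
    by (intro dup_reachable_graft[OF assms(2)]) simp
  then have "dup_reachable ((?g [False, False] x1 @ ?g [True, False] x2) @ ?g [False, True] x3
      @ [[True, True]])"
    by (intro dup_reachable_graft[OF assms(3)]) simp
  then have "dup_reachable ((?g [False, False] x1 @ ?g [True, False] x2 @ ?g [False, True] x3)
      @ ?g [True, True] x4 @ [])"
    by (intro dup_reachable_graft[OF assms(4)]) simp
  then show ?thesis by (simp add: join4_def)
qed

lemma join2_eqD:
  assumes "join2 x y = join2 x' y'"
  shows "x = x' \<and> y = y'"
proof -
  let ?part = "\<lambda>b zs. map tl (filter (\<lambda>p. hd p = b) zs)"
  have "?part False (join2 x y) = x" "?part True (join2 x y) = y" for x y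
    by (simp_all add: join2_def filter_map o_def)
  then show ?thesis
    using arg_cong[OF assms, of "?part False"] arg_cong[OF assms, of "?part True"] by simp
qed

lemma join4_eqD:
  assumes "join4 x1 x2 x3 x4 = join4 x1' x2' x3' x4'"
  shows "x1 = x1' \<and> x2 = x2' \<and> x3 = x3' \<and> x4 = x4'"
proof -
  let ?part = "\<lambda>q zs. map (drop 2) (filter (\<lambda>p. take 2 p = q) zs)"
  have "?part [False, False] (join4 x1 x2 x3 x4) = x1" "?part [True, False] (join4 x1 x2 x3 x4) = x2"
    "?part [False, True] (join4 x1 x2 x3 x4) = x3" "?part [True, True] (join4 x1 x2 x3 x4) = x4"
    for x1 x2 x3 x4
    by (simp_all add: join4_def filter_map o_def)
  then show ?thesis
    using arg_cong[OF assms, of "?part [False, False]"] arg_cong[OF assms, of "?part [True, False]"]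
      arg_cong[OF assms, of "?part [False, True]"] arg_cong[OF assms, of "?part [True, True]"]
    by simp
qed

lemma map_hd_map_append_Cons: "map hd (map ((@) (b # p)) xs) = replicate (length xs) b"
  by (induction xs) auto

text \<open>The two families are told apart by the first letters of the paths.\<close>

lemma sorted_map_hd_join2: "sorted (map hd (join2 x y))"
  unfolding join2_def map_append map_hd_map_append_Cons by (simp add: sorted_append)

lemma not_sorted_map_hd_join4:
  "x2 \<noteq> [] \<Longrightarrow> x3 \<noteq> [] \<Longrightarrow> \<not> sorted (map hd (join4 x1 x2 x3 x4))"
  unfolding join4_def map_append map_hd_map_append_Cons by (simp add: sorted_append ex_bool_eq)
definition conv :: "(nat \<Rightarrow> nat) \<Rightarrow> nat \<Rightarrow> nat" where
  "conv f m = (\<Sum>a\<le>m. f a * f (m - a))"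

lemma card_UN_Times_eq_conv:
  assumes "\<And>a. finite (A a)" "\<And>a x. x \<in> A a \<Longrightarrow> size_of x = a"
  shows "card (\<Union>a\<le>m. A a \<times> A (m - a)) = conv (\<lambda>a. card (A a)) m"
proof -
  have "card (\<Union>a\<le>m. A a \<times> A (m - a)) = (\<Sum>a\<le>m. card (A a \<times> A (m - a)))"
  proof (rule card_UN_disjoint)
    show "\<forall>a\<in>{..m}. \<forall>b\<in>{..m}. a \<noteq> b \<longrightarrow> A a \<times> A (m - a) \<inter> A b \<times> A (m - b) = {}"
      by (blast dest: assms(2))
  qed (simp_all add: assms(1))
  then show ?thesis
    by (simp add: conv_def card_cartesian_product)
qed

definition dup_pairs :: "nat \<Rightarrow> (bool list list \<times> bool list list) set" where
  "dup_pairs m = (\<Union>a\<le>m. dup_arrays a \<times> dup_arrays (m - a))"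

definition dup_quads ::
  "nat \<Rightarrow> ((bool list list \<times> bool list list) \<times> (bool list list \<times> bool list list)) set" where
  "dup_quads m = (\<Union>s\<le>m. dup_pairs s \<times> dup_pairs (m - s))"

lemma card_dup_pairs: "card (dup_pairs m) = conv r_count m"
  unfolding dup_pairs_def r_count_eq_card_dup_arrays
  by (rule card_UN_Times_eq_conv[where size_of = length, OF finite_dup_arrays]) (simp add: dup_arrays_def)

lemma card_dup_quads: "card (dup_quads m) = conv (conv r_count) m"
  unfolding dup_quads_def card_dup_pairs[symmetric]
proof (rule card_UN_Times_eq_conv[where size_of = "\<lambda>(x, y). length x + length y"])
  show "finite (dup_pairs s)" for s
    by (simp add: dup_pairs_def finite_dup_arrays)
qed (auto simp: dup_pairs_def dup_arrays_def)

lemma r_count_ge_conv: "conv r_count m + conv (conv r_count) m \<le> r_count m"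
proof -
  let ?J2 = "(\<lambda>(x, y). join2 x y) ` dup_pairs m"
  let ?J4 = "(\<lambda>((x1, x2), (x3, x4)). join4 x1 x2 x3 x4) ` dup_quads m"
  have "?J2 \<subseteq> dup_arrays m"
    by (auto simp: dup_pairs_def dup_arrays_def join2_def intro: dup_reachable_join2[unfolded join2_def])
  moreover have "?J4 \<subseteq> dup_arrays m"
    by (auto simp: dup_quads_def dup_pairs_def dup_arrays_def join4_def
        intro: dup_reachable_join4[unfolded join4_def])
  moreover have "?J2 \<inter> ?J4 = {}"
  proof -
    have "join2 x y \<noteq> join4 x1 x2 x3 x4" if "x2 \<noteq> []" "x3 \<noteq> []" for x y x1 x2 x3 x4
      using sorted_map_hd_join2[of x y] not_sorted_map_hd_join4[OF that] by metis
    then show ?thesis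
      by (fastforce simp: dup_quads_def dup_pairs_def dup_arrays_def dest: dup_reachable_nonempty)
  qed
  ultimately have "card ?J2 + card ?J4 \<le> card (dup_arrays m)"
    by (metis card_Un_disjoint card_mono finite_dup_arrays finite_subset le_sup_iff)
  moreover have "card ?J2 = card (dup_pairs m)" "card ?J4 = card (dup_quads m)"
    by (auto intro!: card_image inj_onI dest: join2_eqD join4_eqD)
  ultimately show ?thesis
    by (simp add: card_dup_pairs card_dup_quads r_count_eq_card_dup_arrays)
qed


section \<open>Palindromic structures\<close>

text \<open>The 0-indexed half-open segment \<open>S[i..<j]\<close> is a palindrome.\<close>

definition pal_seg :: "'a list \<Rightarrow> nat \<Rightarrow> nat \<Rightarrow> bool" where
  "pal_seg S i j \<longleftrightarrow> (\<forall>t < j - i. S ! (i + t) = S ! (j - 1 - t))"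

definition pal_segs :: "'a list \<Rightarrow> (nat \<times> nat) set" where
  "pal_segs S = {(i, j). i \<le> j \<and> j \<le> length S \<and> pal_seg S i j}"

lemma pal_seg_iff_mem_pal_segs: "i \<le> j \<Longrightarrow> j \<le> length S \<Longrightarrow> pal_seg S i j \<longleftrightarrow> (i, j) \<in> pal_segs S"
  by (simp add: pal_segs_def)

lemma is_palindrome_iff: "is_palindrome P \<longleftrightarrow> (\<forall>t < length P. P ! t = P ! (length P - 1 - t))"
  unfolding is_palindrome_def
proof (intro iffI allI impI ballI)
  fix t
  assume "\<forall>i\<in>{1..length P}. P ! (i - 1) = P ! (length P - i)" "t < length P"
  then show "P ! t = P ! (length P - 1 - t)"
    by (drule_tac x = "Suc t" in bspec) auto
next
  fix i
  assume "\<forall>t < length P. P ! t = P ! (length P - 1 - t)" "i \<in> {1..length P}"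
  then show "P ! (i - 1) = P ! (length P - i)"
    by (drule_tac x = "i - 1" in spec) (auto simp: Suc_diff_Suc)
qed

lemma is_palindrome_substr:
  assumes "1 \<le> a" "a \<le> Suc b" "b \<le> length S"
  shows "is_palindrome (substr S a b) \<longleftrightarrow> pal_seg S (a - 1) b"
proof -
  have "length (substr S a b) = b - (a - 1)"
    using assms by (simp add: substr_def)
  moreover have "substr S a b ! t = S ! (a - 1 + t)"
    and "substr S a b ! (b - (a - 1) - 1 - t) = S ! (b - 1 - t)" if "t < b - (a - 1)" for t
    using that assms by (simp_all add: substr_def)
  ultimately show ?thesis
    unfolding is_palindrome_iff pal_seg_def by simp
qed

definition manacher_of :: "nat \<Rightarrow> (nat \<times> nat) set \<Rightarrow> nat \<Rightarrow> nat" where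
  "manacher_of n A i =
     (if odd i then
        (let k = (i + 1) div 2 in GREATEST r. 1 + r \<le> k \<and> k + r \<le> n \<and> (k - r - 1, k + r) \<in> A)
      else
        (let k = i div 2 in GREATEST r. r \<le> k \<and> k + r \<le> n \<and> (k - r, k + r) \<in> A))"

lemma manacher_entry_eq_manacher_of: "manacher_entry S i = manacher_of (length S) (pal_segs S) i"
proof -
  have odd: "(1 + r \<le> k \<and> k + r \<le> length S \<and> is_palindrome (substr S (k - r) (k + r)))
      \<longleftrightarrow> (1 + r \<le> k \<and> k + r \<le> length S \<and> (k - r - 1, k + r) \<in> pal_segs S)" for k r
    using is_palindrome_substr[of "k - r" "k + r" S] by (auto simp: pal_segs_def)
  have even: "(r \<le> k \<and> k + r \<le> length S \<and> is_palindrome (substr S (k - r + 1) (k + r)))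
      \<longleftrightarrow> (r \<le> k \<and> k + r \<le> length S \<and> (k - r, k + r) \<in> pal_segs S)" for k r
    using is_palindrome_substr[of "k - r + 1" "k + r" S] by (auto simp: pal_segs_def)
  show ?thesis
    unfolding manacher_entry_def manacher_of_def Let_def odd even ..
qed

lemma manacher_eq: "manacher S = map (manacher_of (length S) (pal_segs S)) [1..<2 * length S]"
  by (simp add: manacher_def manacher_entry_eq_manacher_of)

definition pal_structs :: "nat \<Rightarrow> (nat \<times> nat) set set" where
  "pal_structs k = pal_segs ` {S :: nat list. length S = k}"

lemma finite_pal_structs: "finite (pal_structs k)"
proof -
  have "pal_structs k \<subseteq> Pow ({..k} \<times> {..k})"
    by (auto simp: pal_structs_def pal_segs_def)
  then show ?thesis by (rule finite_subset) simp
qed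

lemma rho_le_card_pal_structs: "rho n \<le> card (pal_structs n)"
proof -
  have "{manacher (S :: nat list) | S. length S = n}
      = (\<lambda>A. map (manacher_of n A) [1..<2 * n]) ` pal_structs n"
    by (auto simp: pal_structs_def manacher_eq)
  then show ?thesis
    unfolding rho_def by (simp add: card_image_le finite_pal_structs)
qed

lemma pal_segs_eqI:
  assumes "length S = length T" "\<And>i j. i \<le> j \<Longrightarrow> j \<le> length S \<Longrightarrow> pal_seg S i j = pal_seg T i j"
  shows "pal_segs S = pal_segs T"
  using assms by (auto simp: pal_segs_def)

lemma pal_seg_trivial: "j \<le> Suc i \<Longrightarrow> pal_seg S i j"
  unfolding pal_seg_def by (metis Suc_leI diff_Suc_1 diff_is_0_eq le_antisym add_0_right
    diff_diff_cancel less_Suc_eq_0_disj not_less_eq_eq zero_less_diff)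

lemma pal_seg_Suc_iff:
  assumes "i \<le> j"
  shows "pal_seg S i (Suc j) \<longleftrightarrow> S ! i = S ! j \<and> pal_seg S (Suc i) j"
proof
  assume pal: "pal_seg S i (Suc j)"
  have "0 < Suc j - i"
    using assms by simp
  then have "S ! (i + 0) = S ! (Suc j - 1 - 0)"
    using pal unfolding pal_seg_def by blast
  moreover have "pal_seg S (Suc i) j"
    unfolding pal_seg_def
  proof (intro allI impI)
    fix t
    assume "t < j - Suc i"
    then have "Suc t < Suc j - i"
      by simp
    then have "S ! (i + Suc t) = S ! (Suc j - 1 - Suc t)"
      using pal unfolding pal_seg_def by blast
    then show "S ! (Suc i + t) = S ! (j - 1 - t)"
      by simp
  qed
  ultimately show "S ! i = S ! j \<and> pal_seg S (Suc i) j"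
    by simp
next
  assume ends: "S ! i = S ! j \<and> pal_seg S (Suc i) j"
  show "pal_seg S i (Suc j)"
    unfolding pal_seg_def
  proof (intro allI impI)
    fix t
    assume "t < Suc j - i"
    then consider "t = 0" | "t = j - i" | "0 < t" "t < j - i"
      by linarith
    then show "S ! (i + t) = S ! (Suc j - 1 - t)"
    proof cases
      case 1
      then show ?thesis
        using ends by simp
    next
      case 2
      then have "i + t = j" "Suc j - 1 - t = i"
        using assms by auto
      then show ?thesis
        using ends by simp
    next
      case 3
      then have "t - 1 < j - Suc i" "Suc i + (t - 1) = i + t" "j - 1 - (t - 1) = Suc j - 1 - t"
        by auto
      then show ?thesis
        using ends unfolding pal_seg_def by metis
    qed
  qed
qed

lemma pal_seg_mirror:
  assumes outer: "pal_seg S i j" and inner: "pal_seg S a b" and "i \<le> a" "a \<le> b" "b \<le> j"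
  shows "pal_seg S (i + j - b) (i + j - a)"
  unfolding pal_seg_def
proof (intro allI impI)
  fix t
  assume t: "t < i + j - a - (i + j - b)"
  have reflect: "S ! (i + u) = S ! (j - 1 - u)" if "u < j - i" for u
    using outer that by (simp add: pal_seg_def)
  have "S ! (i + j - b + t) = S ! (b - 1 - t)"
    using reflect[of "j - b + t"] t assms(3-5) by (simp add: add.assoc)
  also have "\<dots> = S ! (a + t)"
    using inner t by (simp add: pal_seg_def)
  also have "\<dots> = S ! (i + j - a - 1 - t)"
    using reflect[of "a - i + t"] t assms(3-5) by (simp add: add.commute)
  finally show "S ! (i + j - b + t) = S ! (i + j - a - 1 - t)" .
qed

lemma pal_seg_snoc: "j \<le> length S \<Longrightarrow> pal_seg (S @ [c]) i j \<longleftrightarrow> pal_seg S i j"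
  by (auto simp: pal_seg_def nth_append)

lemma pal_segs_snoc:
  "pal_segs (S @ [c]) = pal_segs S
     \<union> {(i, Suc (length S)) | i. i \<le> Suc (length S) \<and> pal_seg (S @ [c]) i (Suc (length S))}"
  by (auto simp: pal_segs_def pal_seg_snoc le_Suc_eq)

text \<open>
  The palindromic suffixes of length at least 2 of \<open>S @ [c]\<close> are the \<open>c P c\<close> with \<open>P\<close> in
  \<open>extenders S c\<close>.
\<close>

definition pal_suffixes :: "'a list \<Rightarrow> nat set" where
  "pal_suffixes S = {l. l < length S \<and> pal_seg S (length S - l) (length S)}"

definition pre_char :: "'a list \<Rightarrow> nat \<Rightarrow> 'a" where
  "pre_char S l = S ! (length S - 1 - l)"

definition extenders :: "'a list \<Rightarrow> 'a \<Rightarrow> nat set" where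
  "extenders S c = {l \<in> pal_suffixes S. pre_char S l = c}"

lemma pal_suffixes_subset: "pal_suffixes S \<subseteq> {..<length S}"
  by (auto simp: pal_suffixes_def)

lemma finite_pal_suffixes: "finite (pal_suffixes S)"
  using pal_suffixes_subset finite_subset by blast

lemma finite_extenders: "finite (extenders S c)"
  by (simp add: extenders_def finite_pal_suffixes)

lemma zero_mem_pal_suffixes: "S \<noteq> [] \<Longrightarrow> 0 \<in> pal_suffixes S"
  by (simp add: pal_suffixes_def pal_seg_trivial)

lemma pre_char_in_set: "l \<in> pal_suffixes S \<Longrightarrow> pre_char S l \<in> set S"
  by (auto simp: pal_suffixes_def pre_char_def)

lemma extenders_notin_set: "c \<notin> set S \<Longrightarrow> extenders S c = {}"
  using pre_char_in_set by (fastforce simp: extenders_def)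

lemma pal_suffixes_eq_pal_segs:
  "pal_suffixes S = {l. l < length S \<and> (length S - l, length S) \<in> pal_segs S}"
  by (auto simp: pal_suffixes_def pal_segs_def)

lemma pal_suffixes_eq:
  "pal_segs S = pal_segs T \<Longrightarrow> length S = length T \<Longrightarrow> pal_suffixes S = pal_suffixes T"
  by (simp add: pal_suffixes_eq_pal_segs)

lemma pal_seg_snoc_last:
  assumes "i < length S"
  shows "pal_seg (S @ [c]) i (Suc (length S)) \<longleftrightarrow> length S - 1 - i \<in> extenders S c"
proof -
  have "pal_seg (S @ [c]) i (Suc (length S))
      \<longleftrightarrow> (S @ [c]) ! i = (S @ [c]) ! length S \<and> pal_seg (S @ [c]) (Suc i) (length S)"
    by (rule pal_seg_Suc_iff) (use assms in simp)
  also have "\<dots> \<longleftrightarrow> S ! i = c \<and> pal_seg S (Suc i) (length S)"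
    using assms by (simp add: nth_append pal_seg_snoc)
  also have "\<dots> \<longleftrightarrow> length S - 1 - i \<in> extenders S c"
  proof -
    have "length S - (length S - 1 - i) = Suc i" "length S - 1 - (length S - 1 - i) = i"
      using assms by auto
    then show ?thesis
      using assms unfolding extenders_def pal_suffixes_def pre_char_def by auto
  qed
  finally show ?thesis .
qed

lemma pal_segs_snoc_eq:
  assumes "pal_segs S = pal_segs T" "length S = length T" "extenders S c = extenders T d"
  shows "pal_segs (S @ [c]) = pal_segs (T @ [d])"
proof -
  have "pal_seg (S @ [c]) i (Suc (length S)) = pal_seg (T @ [d]) i (Suc (length T))" for i
  proof (cases "i < length S")
    case True
    then show ?thesis
      using assms pal_seg_snoc_last[of i S c] pal_seg_snoc_last[of i T d] by simp
  next
    case False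
    then show ?thesis
      using assms by (simp add: pal_seg_trivial)
  qed
  then show ?thesis
    using assms by (simp add: pal_segs_snoc)
qed

text \<open>
  For palindromic suffixes \<open>l1 < l2\<close>, the suffix of length \<open>l1\<close> is reflected inside the one of
  length \<open>l2\<close>, so the two preceding letters agree iff the reflection, widened by one letter
  on each side, is a palindrome.
\<close>

lemma pre_char_eq_iff_pal_seg:
  assumes "l1 < l2" "l1 \<in> pal_suffixes S" "l2 \<in> pal_suffixes S"
  shows "pre_char S l1 = pre_char S l2 \<longleftrightarrow> pal_seg S (length S - l2 - 1) (length S - l2 + l1 + 1)"
proof -
  define k where "k = length S"
  define x where "x = k - l2"
  have "l2 < k"
    using assms(3) by (simp add: pal_suffixes_def k_def)
  then have x: "0 < x" "x + l2 = k"
    by (simp_all add: x_def)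
  have long: "pal_seg S x k" and short: "pal_seg S (k - l1) k"
    using assms(2,3) by (simp_all add: pal_suffixes_def k_def x_def)
  have "pal_seg S (x + k - k) (x + k - (k - l1))"
    by (rule pal_seg_mirror[OF long short]) (use assms(1) x in auto)
  then have reflected: "pal_seg S x (x + l1)"
    using assms(1) x by simp
  have "l1 < k - x"
    using assms(1) x by simp
  then have "S ! (x + l1) = S ! (k - 1 - l1)"
    using long unfolding pal_seg_def by blast
  moreover have "length S - 1 - l2 = x - 1"
    using x unfolding k_def by linarith
  ultimately have "pre_char S l1 = S ! (x + l1)" "pre_char S l2 = S ! (x - 1)"
    by (simp_all add: pre_char_def k_def)
  moreover have "pal_seg S (x - 1) (Suc (x + l1)) \<longleftrightarrow> S ! (x - 1) = S ! (x + l1)"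
    using pal_seg_Suc_iff[of "x - 1" "x + l1" S] reflected x by simp
  moreover have "length S - l2 - 1 = x - 1" "length S - l2 + l1 + 1 = Suc (x + l1)"
    using x by (simp_all add: k_def)
  ultimately show ?thesis
    by metis
qed

lemma pre_char_eq_invariant:
  assumes same: "pal_segs S = pal_segs T" "length S = length T"
    and "l1 \<in> pal_suffixes S" "l2 \<in> pal_suffixes S"
  shows "pre_char S l1 = pre_char S l2 \<longleftrightarrow> pre_char T l1 = pre_char T l2"
proof -
  have less: "pre_char S a = pre_char S b \<longleftrightarrow> pre_char T a = pre_char T b"
    if "a < b" "a \<in> pal_suffixes S" "b \<in> pal_suffixes S" for a b
  proof -
    have T: "a \<in> pal_suffixes T" "b \<in> pal_suffixes T"
      using that pal_suffixes_eq[OF same] by auto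
    let ?i = "length S - b - 1" and ?j = "length S - b + a + 1"
    have "b < length S"
      using that by (simp add: pal_suffixes_def)
    then have ij: "?i \<le> ?j" "?j \<le> length S"
      using that by auto
    have "pre_char S a = pre_char S b \<longleftrightarrow> (?i, ?j) \<in> pal_segs S"
      using pre_char_eq_iff_pal_seg[OF that] pal_seg_iff_mem_pal_segs[OF ij] by simp
    also have "\<dots> \<longleftrightarrow> pre_char T a = pre_char T b"
      using pre_char_eq_iff_pal_seg[OF that(1) T] pal_seg_iff_mem_pal_segs[of ?i ?j T] ij same
      by simp
    finally show ?thesis .
  qed
  consider "l1 = l2" | "l1 < l2" | "l2 < l1"
    by linarith
  then show ?thesis
  proof cases
    case 3
    then show ?thesis
      using less[of l2 l1] assms(3,4) by metis
  qed (use less assms(3,4) in auto)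
qed

definition fresh_char :: "nat list \<Rightarrow> nat" where
  "fresh_char R = Suc (sum_list R)"

lemma fresh_char_notin: "fresh_char R \<notin> set R"
  using member_le_sum_list[of "fresh_char R" R] by (auto simp: fresh_char_def)

text \<open>Up to the resulting structure, every letter appended to \<open>R\<close> is one of these.\<close>

definition ext_chars :: "nat list \<Rightarrow> nat set" where
  "ext_chars R = insert (fresh_char R) (pre_char R ` pal_suffixes R)"

lemma pal_segs_snoc_cases:
  assumes same: "pal_segs S = pal_segs R" "length S = length R"
  shows "\<exists>c' \<in> ext_chars R. pal_segs (S @ [c]) = pal_segs (R @ [c'])"
proof (cases "extenders S c = {}")
  case True
  then have "pal_segs (S @ [c]) = pal_segs (R @ [fresh_char R])"
    by (intro pal_segs_snoc_eq[OF same]) (simp add: extenders_notin_set fresh_char_notin)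
  then show ?thesis
    by (auto simp: ext_chars_def)
next
  case False
  then obtain l0 where l0: "l0 \<in> pal_suffixes S" "pre_char S l0 = c"
    by (auto simp: extenders_def)
  have "extenders S c = extenders R (pre_char R l0)"
    using pre_char_eq_invariant[OF same _ l0(1)] pal_suffixes_eq[OF same] l0
    by (auto simp: extenders_def)
  then have "pal_segs (S @ [c]) = pal_segs (R @ [pre_char R l0])"
    by (rule pal_segs_snoc_eq[OF same])
  moreover have "pre_char R l0 \<in> ext_chars R"
    using l0 pal_suffixes_eq[OF same] by (auto simp: ext_chars_def)
  ultimately show ?thesis
    by blast
qed


section \<open>Counting palindromic structures with a potential\<close>

definition suffix_count :: "'a list \<Rightarrow> nat" where
  "suffix_count S = card (pal_suffixes S)"

definition pre_char_count :: "'a list \<Rightarrow> nat" where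
  "pre_char_count S = card (pre_char S ` pal_suffixes S)"

lemma card_image_le_card_image:
  assumes "finite A" "\<And>x y. x \<in> A \<Longrightarrow> y \<in> A \<Longrightarrow> g x = g y \<Longrightarrow> f x = f y"
  shows "card (f ` A) \<le> card (g ` A)"
proof -
  have "f x = f (inv_into A g (g x))" if "x \<in> A" for x
  proof -
    have "inv_into A g (g x) \<in> A" "g (inv_into A g (g x)) = g x"
      using that by (simp_all add: inv_into_into f_inv_into_f)
    then show ?thesis
      using assms(2)[OF that] by simp
  qed
  then have "f ` A = (\<lambda>z. f (inv_into A g z)) ` g ` A"
    unfolding image_image by (rule image_cong[OF refl])
  then show ?thesis
    using card_image_le[OF finite_imageI[OF assms(1)]] by simp
qed

lemma suffix_count_eq:
  assumes "pal_segs S = pal_segs T" "length S = length T"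
  shows "suffix_count S = suffix_count T"
  unfolding suffix_count_def pal_suffixes_eq[OF assms] ..

lemma pre_char_count_eq:
  assumes "pal_segs S = pal_segs T" "length S = length T"
  shows "pre_char_count S = pre_char_count T"
proof -
  have "card (pre_char S ` pal_suffixes S) \<le> card (pre_char T ` pal_suffixes S)"
    by (rule card_image_le_card_image[OF finite_pal_suffixes]) (simp add: pre_char_eq_invariant[OF assms])
  moreover have "card (pre_char T ` pal_suffixes S) \<le> card (pre_char S ` pal_suffixes S)"
    by (rule card_image_le_card_image[OF finite_pal_suffixes]) (simp add: pre_char_eq_invariant[OF assms])
  ultimately show ?thesis
    unfolding pre_char_count_def pal_suffixes_eq[OF assms] by simp
qed

lemma suffix_count_le_length: "suffix_count S \<le> length S"
  using card_mono[OF _ pal_suffixes_subset] by (simp add: suffix_count_def)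

lemma pre_char_count_le_suffix_count: "pre_char_count S \<le> suffix_count S"
  unfolding pre_char_count_def suffix_count_def by (rule card_image_le[OF finite_pal_suffixes])

lemma pre_char_count_le_card_set: "pre_char_count S \<le> card (set S)"
  unfolding pre_char_count_def by (rule card_mono) (auto simp: pre_char_in_set)

lemma pal_suffixes_snoc_subset:
  "pal_suffixes (R @ [c]) \<subseteq> {0, 1} \<union> (\<lambda>l. l + 2) ` extenders R c"
proof
  fix l
  assume l: "l \<in> pal_suffixes (R @ [c])"
  show "l \<in> {0, 1} \<union> (\<lambda>l. l + 2) ` extenders R c"
  proof (cases "l < 2")
    case False
    have "l < Suc (length R)" "pal_seg (R @ [c]) (Suc (length R) - l) (Suc (length R))"
      using l by (auto simp: pal_suffixes_def)
    moreover have "Suc (length R) - l < length R" "length R - 1 - (Suc (length R) - l) = l - 2"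
      using False \<open>l < Suc (length R)\<close> by auto
    ultimately have "l - 2 \<in> extenders R c"
      using pal_seg_snoc_last by metis
    then show ?thesis
      using False by (auto intro: image_eqI[of _ _ "l - 2"])
  qed auto
qed

lemma suffix_count_snoc_le: "suffix_count (R @ [c]) \<le> 2 + card (extenders R c)"
proof -
  have "suffix_count (R @ [c]) \<le> card ({0, 1} \<union> (\<lambda>l. l + 2) ` extenders R c)"
    unfolding suffix_count_def
    by (rule card_mono) (simp add: finite_extenders, rule pal_suffixes_snoc_subset)
  also have "\<dots> \<le> card {0 :: nat, 1} + card ((\<lambda>l. l + 2) ` extenders R c)"
    by (rule card_Un_le)
  also have "\<dots> \<le> 2 + card (extenders R c)"
    using card_image_le[OF finite_extenders, of "\<lambda>l. l + 2" R c] by simp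
  finally show ?thesis .
qed

lemma sum_card_extenders: "(\<Sum>c\<in>pre_char R ` pal_suffixes R. card (extenders R c)) = suffix_count R"
proof -
  have "(\<Sum>c\<in>pre_char R ` pal_suffixes R. card (extenders R c))
      = card (\<Union>c\<in>pre_char R ` pal_suffixes R. extenders R c)"
    by (rule card_UN_disjoint[symmetric]) (auto simp: finite_pal_suffixes finite_extenders extenders_def)
  also have "(\<Union>c\<in>pre_char R ` pal_suffixes R. extenders R c) = pal_suffixes R"
    by (auto simp: extenders_def)
  finally show ?thesis
    by (simp only: suffix_count_def)
qed

lemma sum_suffix_count_snoc_le:
  "(\<Sum>c\<in>pre_char R ` pal_suffixes R. suffix_count (R @ [c])) \<le> 2 * pre_char_count R + suffix_count R"
proof -
  have "(\<Sum>c\<in>pre_char R ` pal_suffixes R. suffix_count (R @ [c]))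
      \<le> (\<Sum>c\<in>pre_char R ` pal_suffixes R. 2 + card (extenders R c))"
    by (rule sum_mono) (rule suffix_count_snoc_le)
  also have "\<dots> = (\<Sum>c\<in>pre_char R ` pal_suffixes R. 2) + (\<Sum>c\<in>pre_char R ` pal_suffixes R. card (extenders R c))"
    by (rule sum.distrib)
  also have "\<dots> = 2 * pre_char_count R + suffix_count R"
    by (simp add: sum_card_extenders pre_char_count_def)
  finally show ?thesis .
qed

text \<open>Appending the letter preceding the empty suffix creates two palindromic suffixes with equal
  preceding letters.\<close>

lemma pre_char_count_snoc_less:
  assumes "R \<noteq> []"
  shows "pre_char_count (R @ [pre_char R 0]) < suffix_count (R @ [pre_char R 0])"
proof -
  let ?R = "R @ [pre_char R 0]"
  have "0 \<in> pal_suffixes ?R" "1 \<in> pal_suffixes ?R"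
    using assms by (auto simp: pal_suffixes_def pal_seg_trivial)
  moreover have "pre_char ?R 0 = pre_char ?R 1"
    using assms by (simp add: pre_char_def nth_append)
  ultimately have "\<not> inj_on (pre_char ?R) (pal_suffixes ?R)"
    by (metis inj_onD zero_neq_one)
  then show ?thesis
    using card_image_le[OF finite_pal_suffixes] inj_on_iff_eq_card[OF finite_pal_suffixes]
    unfolding pre_char_count_def suffix_count_def by (metis le_neq_implies_less)
qed

lemma sum_pre_char_count_snoc_less:
  assumes "R \<noteq> []"
  shows "(\<Sum>c\<in>pre_char R ` pal_suffixes R. pre_char_count (R @ [c]))
       < (\<Sum>c\<in>pre_char R ` pal_suffixes R. suffix_count (R @ [c]))"
proof (rule sum_strict_mono_ex1)
  show "finite (pre_char R ` pal_suffixes R)"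
    by (simp add: finite_pal_suffixes)
  show "\<forall>c\<in>pre_char R ` pal_suffixes R. pre_char_count (R @ [c]) \<le> suffix_count (R @ [c])"
    by (simp add: pre_char_count_le_suffix_count)
  show "\<exists>c\<in>pre_char R ` pal_suffixes R. pre_char_count (R @ [c]) < suffix_count (R @ [c])"
    using assms zero_mem_pal_suffixes pre_char_count_snoc_less by blast
qed

text \<open>
  The potential of a string after \<open>m\<close> more letters: \<open>a\<^sub>m + b\<^sub>m h + g\<^sub>m J\<close> with \<open>h\<close> the number
  of palindromic suffixes and \<open>J\<close> the number of distinct letters preceding them. The recurrence
  of the coefficients is read off from the proof of \<open>sum_potential_snoc_le\<close>.
\<close>

fun coef :: "nat \<Rightarrow> nat \<times> nat \<times> nat" where
  "coef 0 = (1, 0, 0)"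
| "coef (Suc m) = (case coef m of (a, b, g) \<Rightarrow> (a + 2 * b + g, b + g, a + 2 * b + 2 * g))"

definition coef_a :: "nat \<Rightarrow> nat" where "coef_a m = fst (coef m)"
definition coef_b :: "nat \<Rightarrow> nat" where "coef_b m = fst (snd (coef m))"
definition coef_g :: "nat \<Rightarrow> nat" where "coef_g m = snd (snd (coef m))"

lemma coef_0: "coef_a 0 = 1" "coef_b 0 = 0" "coef_g 0 = 0"
  by (simp_all add: coef_a_def coef_b_def coef_g_def)

lemma coef_Suc:
  "coef_a (Suc m) = coef_a m + 2 * coef_b m + coef_g m"
  "coef_b (Suc m) = coef_b m + coef_g m"
  "coef_g (Suc m) = coef_a m + 2 * coef_b m + 2 * coef_g m"
  by (simp_all add: coef_a_def coef_b_def coef_g_def split: prod.splits)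

definition potential :: "nat \<Rightarrow> nat list \<Rightarrow> nat" where
  "potential m S = coef_a m + coef_b m * suffix_count S + coef_g m * pre_char_count S"

lemma potential_eq:
  assumes "pal_segs S = pal_segs T" "length S = length T"
  shows "potential m S = potential m T"
  unfolding potential_def suffix_count_eq[OF assms] pre_char_count_eq[OF assms] ..

lemma potential_le: "potential m S \<le> coef_a m + coef_b m * length S + coef_g m * card (set S)"
  unfolding potential_def
  using mult_le_mono2[OF suffix_count_le_length] mult_le_mono2[OF pre_char_count_le_card_set]
  by (meson add_mono le_refl)

lemma potential_snoc_notin_le:
  assumes "c \<notin> set R"
  shows "potential m (R @ [c]) \<le> coef_a m + 2 * coef_b m + 2 * coef_g m"
proof -
  have "suffix_count (R @ [c]) \<le> 2"
    using suffix_count_snoc_le[of R c] by (simp add: extenders_notin_set assms)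
  moreover have "pre_char_count (R @ [c]) \<le> 2"
    using calculation pre_char_count_le_suffix_count order_trans by blast
  ultimately show ?thesis
    unfolding potential_def by (metis add_mono le_refl mult.commute mult_le_mono1)
qed

lemma sum_potential_snoc_le:
  assumes "R \<noteq> []"
  shows "(\<Sum>c\<in>ext_chars R. potential m (R @ [c])) \<le> potential (Suc m) R"
proof -
  let ?C = "pre_char R ` pal_suffixes R"
  let ?H = "\<Sum>c\<in>?C. suffix_count (R @ [c])" and ?J = "\<Sum>c\<in>?C. pre_char_count (R @ [c])"
  let ?a = "coef_a m" and ?b = "coef_b m" and ?g = "coef_g m"
  let ?h = "suffix_count R" and ?j = "pre_char_count R"
  have "fresh_char R \<notin> ?C"
    using fresh_char_notin[of R] by (auto dest: pre_char_in_set)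
  then have "(\<Sum>c\<in>ext_chars R. potential m (R @ [c]))
      = potential m (R @ [fresh_char R]) + (\<Sum>c\<in>?C. potential m (R @ [c]))"
    by (simp add: ext_chars_def finite_pal_suffixes)
  also have "\<dots> = potential m (R @ [fresh_char R]) + (?j * ?a + ?b * ?H + ?g * ?J)"
    by (simp add: potential_def sum.distrib sum_distrib_left pre_char_count_def)
  also have "\<dots> \<le> (?a + 2 * ?b + ?g) + (?j * ?a + ?b * (2 * ?j + ?h) + ?g * (2 * ?j + ?h))"
  proof -
    have H: "?H \<le> 2 * ?j + ?h"
      by (rule sum_suffix_count_snoc_le)
    then have "?J + 1 \<le> 2 * ?j + ?h"
      using sum_pre_char_count_snoc_less[OF assms] by linarith
    then have "?g * (?J + 1) \<le> ?g * (2 * ?j + ?h)"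
      by (rule mult_le_mono2)
    moreover have "?b * ?H \<le> ?b * (2 * ?j + ?h)"
      using H by (rule mult_le_mono2)
    moreover have "potential m (R @ [fresh_char R]) \<le> ?a + 2 * ?b + 2 * ?g"
      by (rule potential_snoc_notin_le[OF fresh_char_notin])
    ultimately show ?thesis
      by (simp add: distrib_left)
  qed
  also have "\<dots> = potential (Suc m) R"
    by (simp add: potential_def coef_Suc algebra_simps)
  finally show ?thesis .
qed

definition repr :: "nat \<Rightarrow> (nat \<times> nat) set \<Rightarrow> nat list" where
  "repr k A = (SOME S. length S = k \<and> pal_segs S = A)"

lemma repr_spec: "A \<in> pal_structs k \<Longrightarrow> length (repr k A) = k \<and> pal_segs (repr k A) = A"
  unfolding repr_def pal_structs_def by (rule someI_ex) auto

lemma potential_repr: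
  assumes "length S = k"
  shows "potential m (repr k (pal_segs S)) = potential m S"
proof -
  have "pal_segs S \<in> pal_structs k"
    unfolding pal_structs_def using assms by (intro imageI) simp
  from repr_spec[OF this] show ?thesis
    using assms by (intro potential_eq) simp_all
qed

text \<open>\<open>total_potential k m\<close> bounds the number of palindromic structures of length \<open>k + m\<close>.\<close>

definition total_potential :: "nat \<Rightarrow> nat \<Rightarrow> nat" where
  "total_potential k m = (\<Sum>A\<in>pal_structs k. potential m (repr k A))"

lemma card_pal_structs_eq_total_potential: "card (pal_structs n) = total_potential n 0"
  by (simp add: total_potential_def potential_def coef_0)

lemma pal_structs_Suc_subset:
  "pal_structs (Suc k)
     \<subseteq> (\<lambda>(A, c). pal_segs (repr k A @ [c])) ` (SIGMA A:pal_structs k. ext_chars (repr k A))"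
proof -
  have "pal_segs (S @ [c]) \<in> (\<lambda>(A, c). pal_segs (repr k A @ [c])) ` (SIGMA A:pal_structs k. ext_chars (repr k A))"
    if "length S = k" for S :: "nat list" and c
  proof -
    have A: "pal_segs S \<in> pal_structs k"
      unfolding pal_structs_def using that by (intro imageI) simp
    have "\<exists>c' \<in> ext_chars (repr k (pal_segs S)). pal_segs (S @ [c]) = pal_segs (repr k (pal_segs S) @ [c'])"
      using repr_spec[OF A] that by (intro pal_segs_snoc_cases) auto
    then obtain c' where "(pal_segs S, c') \<in> (SIGMA A:pal_structs k. ext_chars (repr k A))"
      "pal_segs (S @ [c]) = (\<lambda>(A, c). pal_segs (repr k A @ [c])) (pal_segs S, c')"
      using A by auto
    then show ?thesis
      by (rule rev_image_eqI)
  qed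
  then show ?thesis
    by (auto simp: pal_structs_def length_Suc_conv_rev)
qed

lemma total_potential_Suc_le:
  assumes "1 \<le> k"
  shows "total_potential (Suc k) m \<le> total_potential k (Suc m)"
proof -
  let ?ext = "\<lambda>(A, c). pal_segs (repr k A @ [c])"
  let ?Sig = "SIGMA A:pal_structs k. ext_chars (repr k A)"
  have fin: "finite ?Sig"
    by (simp add: finite_pal_structs ext_chars_def finite_pal_suffixes)
  have "total_potential (Suc k) m \<le> (\<Sum>B\<in>?ext ` ?Sig. potential m (repr (Suc k) B))"
    unfolding total_potential_def using pal_structs_Suc_subset by (intro sum_mono2) (simp_all add: fin)
  also have "\<dots> \<le> (\<Sum>(A, c)\<in>?Sig. potential m (repr (Suc k) (pal_segs (repr k A @ [c]))))"
    using sum_image_le[OF fin, of "\<lambda>B. potential m (repr (Suc k) B)" ?ext]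
    by (simp add: o_def case_prod_beta)
  also have "\<dots> = (\<Sum>A\<in>pal_structs k. \<Sum>c\<in>ext_chars (repr k A).
      potential m (repr (Suc k) (pal_segs (repr k A @ [c]))))"
    by (rule sum.Sigma[symmetric]) (simp_all add: finite_pal_structs ext_chars_def finite_pal_suffixes)
  also have "\<dots> = (\<Sum>A\<in>pal_structs k. \<Sum>c\<in>ext_chars (repr k A). potential m (repr k A @ [c]))"
    by (intro sum.cong refl) (simp add: potential_repr repr_spec)
  also have "\<dots> \<le> total_potential k (Suc m)"
    unfolding total_potential_def
  proof (rule sum_mono)
    fix A
    assume "A \<in> pal_structs k"
    then have "repr k A \<noteq> []"
      using repr_spec[of A k] assms by auto
    then show "(\<Sum>c\<in>ext_chars (repr k A). potential m (repr k A @ [c])) \<le> potential (Suc m) (repr k A)"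
      by (rule sum_potential_snoc_le)
  qed
  finally show ?thesis .
qed

lemma total_potential_shift_le: "1 \<le> k \<Longrightarrow> total_potential (k + d) m \<le> total_potential k (m + d)"
proof (induction d arbitrary: m)
  case (Suc d)
  have "total_potential (k + Suc d) m \<le> total_potential (k + d) (Suc m)"
    using total_potential_Suc_le[of "k + d" m] Suc.prems by simp
  also have "\<dots> \<le> total_potential k (m + Suc d)"
    using Suc.IH[of "Suc m"] Suc.prems by simp
  finally show ?case .
qed simp

text \<open>The two palindromic structures of length 2 contribute \<open>2 a + 4 b + 3 g\<close>.\<close>

definition struct_bound :: "nat \<Rightarrow> nat" where
  "struct_bound n = 2 * coef_a (n - 2) + 4 * coef_b (n - 2) + 3 * coef_g (n - 2)"

lemma pal_structs_2: "pal_structs 2 \<subseteq> {pal_segs [0 :: nat, 0], pal_segs [0 :: nat, 1]}"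
proof
  have two: "pal_seg U 0 2 \<longleftrightarrow> U ! 0 = U ! 1" for U :: "nat list"
    using pal_seg_Suc_iff[of 0 1 U] pal_seg_trivial[of 1 1 U] by (simp add: numeral_2_eq_2)
  fix A
  assume "A \<in> pal_structs 2"
  then obtain S :: "nat list" where S: "length S = 2" "A = pal_segs S"
    by (auto simp: pal_structs_def)
  have "pal_segs S = pal_segs [0 :: nat, if S ! 0 = S ! 1 then 0 else 1]"
  proof (rule pal_segs_eqI)
    fix i j
    assume "i \<le> j" "j \<le> length S"
    then consider "j \<le> Suc i" | "i = 0" "j = 2"
      using S(1) by linarith
    then show "pal_seg S i j = pal_seg [0 :: nat, if S ! 0 = S ! 1 then 0 else 1] i j"
      by cases (simp_all add: pal_seg_trivial two)
  qed (use S in simp)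
  then show "A \<in> {pal_segs [0 :: nat, 0], pal_segs [0 :: nat, 1]}"
    using S by (auto split: if_splits)
qed

lemma total_potential_2_le: "total_potential 2 m \<le> struct_bound (m + 2)"
proof -
  have "total_potential 2 m \<le> (\<Sum>A\<in>{pal_segs [0 :: nat, 0], pal_segs [0 :: nat, 1]}. potential m (repr 2 A))"
    unfolding total_potential_def by (rule sum_mono2[OF _ pal_structs_2]) simp_all
  also have "\<dots> \<le> potential m (repr 2 (pal_segs [0 :: nat, 0])) + potential m (repr 2 (pal_segs [0 :: nat, 1]))"
    by (cases "pal_segs [0 :: nat, 0] = pal_segs [0 :: nat, 1]") simp_all
  also have "\<dots> = potential m [0, 0] + potential m [0, 1]"
    by (simp add: potential_repr)
  also have "\<dots> \<le> struct_bound (m + 2)"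
    using potential_le[of m "[0, 0]"] potential_le[of m "[0, 1]"] by (simp add: struct_bound_def)
  finally show ?thesis .
qed

lemma card_pal_structs_le_struct_bound:
  assumes "2 \<le> n"
  shows "card (pal_structs n) \<le> struct_bound n"
proof -
  obtain d where n: "n = 2 + d"
    using assms le_Suc_ex by blast
  have "card (pal_structs n) = total_potential (2 + d) 0"
    unfolding n by (rule card_pal_structs_eq_total_potential)
  also have "\<dots> \<le> total_potential 2 d"
    using total_potential_shift_le[of 2 d 0] by simp
  also have "\<dots> \<le> struct_bound n"
    using total_potential_2_le[of d] n by (simp add: add.commute)
  finally show ?thesis .
qed

lemma card_pal_structs_1: "card (pal_structs 1) \<le> 1"
proof -
  have "pal_structs 1 \<subseteq> {pal_segs [0 :: nat]}"
    by (auto simp: pal_structs_def length_Suc_conv intro!: pal_segs_eqI pal_seg_trivial)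
  then show ?thesis
    using card_mono[of "{pal_segs [0 :: nat]}"] by simp
qed


section \<open>Comparison with the duplication counts\<close>

lemma conv_mono:
  assumes "f 0 = 0" "\<And>a. 0 < a \<Longrightarrow> a < m \<Longrightarrow> f a \<le> g a"
  shows "conv f m \<le> conv g m"
  unfolding conv_def
proof (rule sum_mono)
  fix a
  assume "a \<in> {..m}"
  show "f a * f (m - a) \<le> g a * g (m - a)"
  proof (cases "a = 0 \<or> a = m")
    case True
    then show ?thesis
      using assms(1) by auto
  next
    case False
    then have "0 < a" "a < m" "0 < m - a" "m - a < m"
      using \<open>a \<in> {..m}\<close> by auto
    then show ?thesis
      using assms(2)[of a] assms(2)[of "m - a"] by (simp add: mult_le_mono)
  qed
qed

lemma conv_conv_mono:
  assumes "f 0 = 0" "\<And>a. 0 < a \<Longrightarrow> a < m \<Longrightarrow> f a \<le> g a"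
  shows "conv (conv f) m \<le> conv (conv g) m"
proof (rule conv_mono)
  show "conv f 0 = 0"
    using assms(1) by (simp add: conv_def)
  show "conv f s \<le> conv g s" if "0 < s" "s < m" for s
    by (rule conv_mono) (use assms that in auto)
qed
definition r_table :: "nat list" where
  "r_table = [0, 1, 1, 2, 6, 20, 70, 256, 969, 3762, 14894, 59904, 244088]"

lemma r_table_le_conv:
  assumes "2 \<le> a" "a \<le> 12"
  shows "r_table ! a \<le> conv ((!) r_table) a + conv (conv ((!) r_table)) a"
proof -
  have "a = 2 \<or> a = 3 \<or> a = 4 \<or> a = 5 \<or> a = 6 \<or> a = 7 \<or> a = 8 \<or> a = 9 \<or> a = 10 \<or> a = 11 \<or> a = 12"
    using assms by presburger
  then show ?thesis
    unfolding conv_def r_table_def by (elim disjE) (simp_all add: atMost_nat_numeral)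
qed

lemma r_table_le_r_count: "a \<le> 12 \<Longrightarrow> r_table ! a \<le> r_count a"
proof (induction a rule: less_induct)
  case (less a)
  consider "a = 0" | "a = 1" | "2 \<le> a"
    by linarith
  then show ?case
  proof cases
    case 1
    then show ?thesis
      by (simp add: r_table_def)
  next
    case 2
    have "[[]] \<in> dup_arrays 1"
      by (simp add: dup_arrays_def dup_reachable.root)
    then show ?thesis
      using 2 finite_dup_arrays[of 1] card_gt_0_iff[of "dup_arrays 1"]
      by (auto simp: r_table_def r_count_eq_card_dup_arrays)
  next
    case 3
    have r_table_0: "r_table ! 0 = 0"
      by (simp add: r_table_def)
    have "r_table ! a \<le> conv ((!) r_table) a + conv (conv ((!) r_table)) a"
      using 3 less.prems by (rule r_table_le_conv)
    also have "\<dots> \<le> conv r_count a + conv (conv r_count) a"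
    proof (rule add_mono)
      show "conv ((!) r_table) a \<le> conv r_count a"
        by (rule conv_mono) (use r_table_0 less in auto)
      show "conv (conv ((!) r_table)) a \<le> conv (conv r_count) a"
        by (rule conv_conv_mono) (use r_table_0 less in auto)
    qed
    also have "\<dots> \<le> r_count a"
      by (rule r_count_ge_conv)
    finally show ?thesis .
  qed
qed

lemma coef_numeral:
  "coef (numeral k) = (case coef (pred_numeral k) of (a, b, g) \<Rightarrow> (a + 2 * b + g, b + g, a + 2 * b + 2 * g))"
  by (simp add: numeral_eq_Suc)

lemma struct_bound_le_r_table: "2 \<le> n \<Longrightarrow> n \<le> 11 \<Longrightarrow> struct_bound n \<le> r_table ! (n + 1)"
proof -
  assume "2 \<le> n" "n \<le> 11"
  then have "n = 2 \<or> n = 3 \<or> n = 4 \<or> n = 5 \<or> n = 6 \<or> n = 7 \<or> n = 8 \<or> n = 9 \<or> n = 10 \<or> n = 11"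
    by presburger
  then show ?thesis
    by (elim disjE) (simp_all add: struct_bound_def coef_a_def coef_b_def coef_g_def r_table_def coef_numeral)
qed

lemma struct_bound_recurrence:
  assumes "8 \<le> n"
  shows "struct_bound n \<le> 2 * (\<Sum>a\<in>{1..6}. r_table ! a * struct_bound (n - a))"
proof -
  obtain m where "n = 8 + m"
    using le_Suc_ex[OF assms] by blast
  then have n: "n = Suc (Suc (Suc (Suc (Suc (Suc (Suc (Suc m)))))))"
    by simp
  obtain a b g where c: "coef m = (a, b, g)"
    by (metis prod.exhaust)
  have "{1..6 :: nat} = {1, 2, 3, 4, 5, 6}"
    by auto
  then show ?thesis
    unfolding n by (simp add: c struct_bound_def coef_a_def coef_b_def coef_g_def r_table_def)
qed

lemma conv_ge_double_sum:
  assumes "2 * k < m"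
  shows "2 * (\<Sum>a\<in>{1..k}. f a * f (m - a)) \<le> conv f m"
proof -
  let ?g = "\<lambda>a. f a * f (m - a)"
  let ?B = "(\<lambda>a. m - a) ` {1..k}"
  have "inj_on (\<lambda>a. m - a) {1..k}"
    using assms by (auto simp: inj_on_def)
  then have "sum ?g ?B = (\<Sum>a\<in>{1..k}. ?g (m - a))"
    by (simp add: sum.reindex)
  also have "\<dots> = sum ?g {1..k}"
    using assms by (intro sum.cong) (auto simp: mult.commute)
  finally have "2 * sum ?g {1..k} = sum ?g ({1..k} \<union> ?B)"
    using assms by (subst sum.union_disjoint) auto
  also have "\<dots> \<le> sum ?g {..m}"
    by (rule sum_mono2) (use assms in auto)
  finally show ?thesis
    by (simp add: conv_def)
qed

lemma struct_bound_le_r_count: "2 \<le> n \<Longrightarrow> struct_bound n \<le> r_count (n + 1)"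
proof (induction n rule: less_induct)
  case (less n)
  show ?case
  proof (cases "n \<le> 11")
    case True
    then show ?thesis
      using struct_bound_le_r_table[OF less.prems] r_table_le_r_count[of "n + 1"] by simp
  next
    case False
    have IH: "struct_bound (n - a) \<le> r_count (n + 1 - a)" if "a \<in> {1..6}" for a
    proof -
      have "n - a < n" "2 \<le> n - a" "n + 1 - a = n - a + 1"
        using that False by auto
      then show ?thesis
        using less.IH[of "n - a"] by simp
    qed
    have "struct_bound n \<le> 2 * (\<Sum>a\<in>{1..6}. r_table ! a * struct_bound (n - a))"
      using False by (intro struct_bound_recurrence) simp
    also have "\<dots> \<le> 2 * (\<Sum>a\<in>{1..6}. r_count a * r_count (n + 1 - a))"
      using IH r_table_le_r_count by (intro mult_le_mono2 sum_mono mult_mono) auto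
    also have "\<dots> \<le> conv r_count (n + 1)"
      using False by (intro conv_ge_double_sum) simp
    also have "\<dots> \<le> r_count (n + 1)"
      using r_count_ge_conv[of "n + 1"] by simp
    finally show ?thesis .
  qed
qed

theorem theorem3p1:
  fixes n :: nat
  assumes "n \<ge> 1"
  shows "rho n \<le> r_count (n + 1)"
proof (cases "n = 1")
  case True
  have "rho 1 \<le> 1"
    using rho_le_card_pal_structs[of 1] card_pal_structs_1 by simp
  also have "1 \<le> r_count 2"
    using r_table_le_r_count[of 2] by (simp add: r_table_def)
  finally show ?thesis
    using True by (simp add: numeral_2_eq_2)
next
  case False
  then have "2 \<le> n"
    using assms by simp
  have "rho n \<le> card (pal_structs n)"
    by (rule rho_le_card_pal_structs)
  also have "\<dots> \<le> struct_bound n"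
    using \<open>2 \<le> n\<close> by (rule card_pal_structs_le_struct_bound)
  also have "\<dots> \<le> r_count (n + 1)"
    using \<open>2 \<le> n\<close> by (rule struct_bound_le_r_count)
  finally show ?thesis .
qed

end
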